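(* In the setting described in the context: (1) If the model is DUR with constants $d,k$ and the parametrisation $(\tilde X,\Theta)$ is GTIP, then for all sufficiently small $\alpha>0$, $\mathbf E\{e^{\alpha X}\mid Y=y,\Theta=\theta\}\le e^{\alpha\theta}(1-\alpha d/2)$ for all $\theta>k$, and $\mathbf E\{e^{-\alpha X}\mid Y=y,\Theta=\theta\}\le e^{-\alpha\theta}(1-\alpha d/2)$ for all $\theta<-k$. (2) If the model is PUR with constants $d,k$ and the parametrisation $(X,\Theta)$ is GTIP, then for all sufficiently small $\alpha>0$, $\mathbf E\{e^{\alpha(y-\tilde X)}\mid Y=y,\Theta=\theta\}\le e^{\alpha\theta}(1-\alpha d/2)$ for all $\theta>k$, and $\mathbf E\{e^{-\alpha(y-\tilde X)}\mid Y=y,\Theta=\theta\}\le e^{-\alpha\theta}(1-\alpha d/2)$ for all $\theta<-k$.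
   Context: Fix an observed value $y\in\mathbb R$. Consider the model $Y=X+Z_1$, $X=\Theta+Z_2$, where $Z_1,Z_2$ are independent real random variables, independent of $\Theta$, whose distributions are symmetric about $0$ and have continuous, bounded, everywhere positive Lebesgue densities $f_1,f_2$; $\Theta$ is given the improper flat (Lebesgue) prior on $\mathbb R$, and the posterior $\mathcal L(X,\Theta\mid Y=y)$ is proper. Write $\tilde X=X-\Theta$. A parametrisation $(U,\Theta)$, $U\in\{X,\tilde X\}$, is GTIP (geometrically tight in parameter) if there are constants $a,b>0$ not depending on $\theta$ such that $\mathbf P(|U|>x\mid Y=y,\Theta=\theta)\le ae^{-bx}$ for all $\theta\in\mathbb R$ and $x\ge0$. The model is DUR (data uniformly relevant) with constants $d,k>0$ if $|\mathbf E\{X\mid Y=y,\Theta=\theta\}|\le|\theta|-d$ for all $|\theta|>k$; it is PUR (parameter uniformly relevant) with constants $d,k>0$ if $\operatorname{sgn}(\theta)\,\mathbf E\{X-y\mid Y=y,\Theta=\theta\}\ge d$ for all $|\theta|>k$. *)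

theory Defs
  imports "HOL-Analysis.Analysis"
begin

definition noise_density :: "(real \<Rightarrow> real) \<Rightarrow> bool" where
  "noise_density f \<longleftrightarrow>
     f \<in> borel_measurable lborel \<and> integrable lborel f \<and> integral\<^sup>L lborel f = 1 \<and>
     (\<forall>x. f (- x) = f x) \<and> continuous_on UNIV f \<and> bounded (range f) \<and> (\<forall>x. 0 < f x)"

text \<open>Unnormalised joint posterior density of (X, Theta) given Y = y under the flat prior:
  f2 (x - theta) * f1 (y - x).\<close>
definition post_dens :: "(real \<Rightarrow> real) \<Rightarrow> (real \<Rightarrow> real) \<Rightarrow> real \<Rightarrow> real \<Rightarrow> real \<Rightarrow> real" where
  "post_dens f1 f2 y \<theta> x = f2 (x - \<theta>) * f1 (y - x)"

definition posterior_proper :: "(real \<Rightarrow> real) \<Rightarrow> (real \<Rightarrow> real) \<Rightarrow> real \<Rightarrow> bool" where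
  "posterior_proper f1 f2 y \<longleftrightarrow>
     (\<integral>\<^sup>+ x. \<integral>\<^sup>+ \<theta>. ennreal (post_dens f1 f2 y \<theta> x) \<partial>lborel \<partial>lborel) < \<infinity>"

definition cond_law :: "(real \<Rightarrow> real) \<Rightarrow> (real \<Rightarrow> real) \<Rightarrow> real \<Rightarrow> real \<Rightarrow> real measure" where
  "cond_law f1 f2 y \<theta> = density lborel (\<lambda>x. ennreal (post_dens f1 f2 y \<theta> x /
       (LINT u|lborel. post_dens f1 f2 y \<theta> u)))"

text \<open>GTIP for the parametrisation (U, Theta), where U is given as a function
  U theta x of the parameter and of X (U = X: (\<lambda>\<theta> x. x); U = X - Theta: (\<lambda>\<theta> x. x - \<theta>)).\<close>
definition GTIP :: "(real \<Rightarrow> real) \<Rightarrow> (real \<Rightarrow> real) \<Rightarrow> real \<Rightarrow> (real \<Rightarrow> real \<Rightarrow> real) \<Rightarrow> bool" where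
  "GTIP f1 f2 y U \<longleftrightarrow> (\<exists>a b. a > 0 \<and> b > 0 \<and>
     (\<forall>\<theta> t. t \<ge> 0 \<longrightarrow>
        measure (cond_law f1 f2 y \<theta>) {x. \<bar>U \<theta> x\<bar> > t} \<le> a * exp (- b * t)))"

definition DUR :: "(real \<Rightarrow> real) \<Rightarrow> (real \<Rightarrow> real) \<Rightarrow> real \<Rightarrow> real \<Rightarrow> real \<Rightarrow> bool" where
  "DUR f1 f2 y d k \<longleftrightarrow> d > 0 \<and> k > 0 \<and>
     (\<forall>\<theta>. \<bar>\<theta>\<bar> > k \<longrightarrow> \<bar>LINT x|cond_law f1 f2 y \<theta>. x\<bar> \<le> \<bar>\<theta>\<bar> - d)"

definition PUR :: "(real \<Rightarrow> real) \<Rightarrow> (real \<Rightarrow> real) \<Rightarrow> real \<Rightarrow> real \<Rightarrow> real \<Rightarrow> bool" where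
  "PUR f1 f2 y d k \<longleftrightarrow> d > 0 \<and> k > 0 \<and>
     (\<forall>\<theta>. \<bar>\<theta>\<bar> > k \<longrightarrow> sgn \<theta> * (LINT x|cond_law f1 f2 y \<theta>. x - y) \<ge> d)"

end

theory Submission
  imports Defs "HOL-Probability.Probability"
begin

text \<open>
  The argument is a Lyapunov-type moment bound for a single random variable V on a probability
  space: if V has an exponential tail, P(|V| > t) <= a exp(-b t), then E exp(b/2 |V|) is bounded
  by a constant depending only on (a, b), and the second-order expansion
  exp z <= 1 + z + z^2 exp|z| / 2 yields E exp(alpha V) <= 1 + alpha E V + K alpha^2 for
  0 <= alpha <= b/4.  Hence if in addition E V <= -d, then E exp(alpha V) <= 1 - alpha d / 2 for
  all 0 < alpha < alpha0, where alpha0 depends only on (a, b, d).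
\<close>

definition exp_tail :: "'a measure \<Rightarrow> ('a \<Rightarrow> real) \<Rightarrow> real \<Rightarrow> real \<Rightarrow> bool" where
  "exp_tail M V a b \<longleftrightarrow> (\<forall>t\<ge>0. measure M {x\<in>space M. \<bar>V x\<bar> > t} \<le> a * exp (- b * t))"

lemma exp_tail_mono:
  assumes "prob_space M" and [measurable]: "V \<in> borel_measurable M"
    and "exp_tail M V a b" and "\<And>x. x \<in> space M \<Longrightarrow> \<bar>W x\<bar> \<le> \<bar>V x\<bar>"
  shows "exp_tail M W a b"
  unfolding exp_tail_def
proof (intro allI impI)
  interpret prob_space M by fact
  fix t :: real assume "t \<ge> 0"
  have "measure M {x\<in>space M. \<bar>W x\<bar> > t} \<le> measure M {x\<in>space M. \<bar>V x\<bar> > t}"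
    using assms(4) by (intro finite_measure_mono) force+
  also have "\<dots> \<le> a * exp (- b * t)"
    using assms(3) \<open>t \<ge> 0\<close> unfolding exp_tail_def by blast
  finally show "measure M {x\<in>space M. \<bar>W x\<bar> > t} \<le> a * exp (- b * t)" .
qed

lemma exp_tail_shift:
  assumes "prob_space M" and [measurable]: "V \<in> borel_measurable M"
    and tail: "exp_tail M V a b" and "b > 0"
  shows "exp_tail M (\<lambda>x. V x + c) (max a 1 * exp (b * \<bar>c\<bar>)) b"
  unfolding exp_tail_def
proof (intro allI impI)
  interpret prob_space M by fact
  fix t :: real assume "t \<ge> 0"
  let ?A = "{x\<in>space M. \<bar>V x + c\<bar> > t}"
  show "measure M ?A \<le> max a 1 * exp (b * \<bar>c\<bar>) * exp (- b * t)"
  proof (cases "t \<ge> \<bar>c\<bar>")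
    case True
    have "measure M ?A \<le> measure M {x\<in>space M. \<bar>V x\<bar> > t - \<bar>c\<bar>}"
      by (intro finite_measure_mono) auto
    also have "\<dots> \<le> a * exp (- b * (t - \<bar>c\<bar>))"
      using tail True unfolding exp_tail_def by simp
    also have "\<dots> = a * exp (b * \<bar>c\<bar>) * exp (- b * t)"
      by (simp add: mult_exp_exp algebra_simps)
    also have "\<dots> \<le> max a 1 * exp (b * \<bar>c\<bar>) * exp (- b * t)"
      by (intro mult_right_mono) auto
    finally show ?thesis .
  next
    case False
    have "measure M ?A \<le> 1" by simp
    also have "1 \<le> exp (b * \<bar>c\<bar> + - b * t)"
      using False \<open>b > 0\<close> by (simp add: algebra_simps mult_left_mono)
    also have "\<dots> = exp (b * \<bar>c\<bar>) * exp (- b * t)"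
      by (simp add: exp_add[symmetric])
    also have "\<dots> \<le> max a 1 * exp (b * \<bar>c\<bar>) * exp (- b * t)"
      by (intro mult_right_mono) auto
    finally show ?thesis .
  qed
qed

text \<open>The bound on E exp (b/2 |V|) obtained from an exponential tail with constants a and b.\<close>
definition tail_moment_const :: "real \<Rightarrow> real \<Rightarrow> real" where
  "tail_moment_const a b = max 1 (a * exp b) / (1 - exp (- b / 2))"

lemma tail_moment_const_pos: "b > 0 \<Longrightarrow> tail_moment_const a b > 0"
  unfolding tail_moment_const_def by (intro divide_pos_pos) auto

lemma exp_tail_level_bound:
  assumes "prob_space M" and "exp_tail M V a b" and "b > 0"
  shows "exp (b / 2 * real n) * measure M {x\<in>space M. \<bar>V x\<bar> > real n - 1}
           \<le> max 1 (a * exp b) * exp (- b / 2) ^ n"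
proof (cases n)
  case 0
  interpret prob_space M by fact
  have "prob {x\<in>space M. \<bar>V x\<bar> > real n - 1} \<le> 1" by simp
  also have "1 \<le> max 1 (a * exp b)" by simp
  finally show ?thesis using 0 by simp
next
  case (Suc m)
  have "measure M {x\<in>space M. \<bar>V x\<bar> > real n - 1} \<le> a * exp (- b * (real n - 1))"
    using assms(2) Suc unfolding exp_tail_def by simp
  then have "exp (b / 2 * real n) * measure M {x\<in>space M. \<bar>V x\<bar> > real n - 1}
      \<le> exp (b / 2 * real n) * (a * exp (- b * (real n - 1)))"
    by (simp add: mult_left_mono)
  also have "\<dots> = a * exp b * exp (- b / 2) ^ n"
    by (simp add: exp_of_nat_mult[symmetric] mult_exp_exp algebra_simps)
  also have "\<dots> \<le> max 1 (a * exp b) * exp (- b / 2) ^ n"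
    by (intro mult_right_mono) auto
  finally show ?thesis .
qed

lemma exp_le_level_series:
  fixes \<beta> v :: real
  assumes "\<beta> \<ge> 0"
  shows "ennreal (exp (\<beta> * \<bar>v\<bar>)) \<le> (\<Sum>n. ennreal (exp (\<beta> * real n)) * indicator {u. \<bar>u\<bar> > real n - 1} v)"
proof -
  define m where "m = nat \<lceil>\<bar>v\<bar>\<rceil>"
  have "\<bar>v\<bar> \<le> real m" "real m - 1 < \<bar>v\<bar>" unfolding m_def by linarith+
  then have "ennreal (exp (\<beta> * \<bar>v\<bar>)) \<le> ennreal (exp (\<beta> * real m)) * indicator {u. \<bar>u\<bar> > real m - 1} v"
    using assms by (auto intro!: ennreal_leI mult_left_mono)
  also have "\<dots> \<le> (\<Sum>n. ennreal (exp (\<beta> * real n)) * indicator {u. \<bar>u\<bar> > real n - 1} v)"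
    using sum_le_suminf[OF summableI, of "{m}"] by simp
  finally show ?thesis .
qed

lemma exp_tail_exp_moment:
  assumes "prob_space M" and [measurable]: "V \<in> borel_measurable M"
    and tail: "exp_tail M V a b" and "b > 0"
  shows "integrable M (\<lambda>x. exp (b / 2 * \<bar>V x\<bar>))"
    and "(LINT x|M. exp (b / 2 * \<bar>V x\<bar>)) \<le> tail_moment_const a b"
proof -
  interpret prob_space M by fact
  define c where "c = max 1 (a * exp b)"
  define r where "r = exp (- b / 2)"
  define S where "S n = {x\<in>space M. \<bar>V x\<bar> > real n - 1}" for n :: nat
  have [measurable]: "S n \<in> sets M" for n unfolding S_def by measurable
  have r: "0 < r" "r < 1" using \<open>b > 0\<close> by (auto simp: r_def)
  have geometric: "(\<lambda>n. c * r ^ n) sums (c / (1 - r))"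
    using sums_mult[OF geometric_sums[of r], of c] r by simp
  have "(\<integral>\<^sup>+ x. ennreal (exp (b / 2 * \<bar>V x\<bar>)) \<partial>M)
      \<le> (\<integral>\<^sup>+ x. (\<Sum>n. ennreal (exp (b / 2 * real n)) * indicator (S n) x) \<partial>M)"
    using exp_le_level_series[of "b / 2"] \<open>b > 0\<close>
    by (intro nn_integral_mono) (simp add: S_def indicator_def)
  also have "\<dots> = (\<Sum>n. ennreal (exp (b / 2 * real n)) * emeasure M (S n))"
    by (simp add: nn_integral_suminf nn_integral_cmult_indicator)
  also have "\<dots> \<le> (\<Sum>n. ennreal (c * r ^ n))"
    using exp_tail_level_bound[OF \<open>prob_space M\<close> tail \<open>b > 0\<close>]
    by (intro suminf_le) (auto simp: S_def c_def r_def emeasure_eq_measure ennreal_mult[symmetric])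
  also have "\<dots> = ennreal (c / (1 - r))"
    using geometric r by (intro suminf_ennreal_eq) (auto simp: c_def)
  finally have bound: "(\<integral>\<^sup>+ x. ennreal (exp (b / 2 * \<bar>V x\<bar>)) \<partial>M) \<le> ennreal (c / (1 - r))" .
  show int: "integrable M (\<lambda>x. exp (b / 2 * \<bar>V x\<bar>))"
    using bound by (auto simp: integrable_iff_bounded top_unique[symmetric] intro: le_less_trans)
  have "ennreal (LINT x|M. exp (b / 2 * \<bar>V x\<bar>)) \<le> ennreal (c / (1 - r))"
    using bound nn_integral_eq_integral[OF int] by simp
  then show "(LINT x|M. exp (b / 2 * \<bar>V x\<bar>)) \<le> tail_moment_const a b"
    using r by (subst (asm) ennreal_le_iff) (auto simp: tail_moment_const_def c_def r_def)
qed

text \<open>In particular V itself is integrable, as |V| <= exp (b/2 |V|) / (b/2).\<close>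
lemma exp_tail_integrable:
  assumes "prob_space M" and [measurable]: "V \<in> borel_measurable M"
    and tail: "exp_tail M V a b" and "b > 0"
  shows "integrable M V"
proof (rule Bochner_Integration.integrable_bound[of _ "\<lambda>x. exp (b / 2 * \<bar>V x\<bar>) / (b / 2)"])
  have "\<bar>v\<bar> \<le> exp (b / 2 * \<bar>v\<bar>) / (b / 2)" for v :: real
  proof -
    have "1 + b / 2 * \<bar>v\<bar> \<le> exp (b / 2 * \<bar>v\<bar>)" by (rule exp_ge_add_one_self)
    moreover have "\<bar>v\<bar> * (b / 2) = b / 2 * \<bar>v\<bar>" by (rule mult.commute)
    ultimately show ?thesis using \<open>b > 0\<close> by (subst pos_le_divide_eq) linarith+
  qed
  then show "AE x in M. norm (V x) \<le> norm (exp (b / 2 * \<bar>V x\<bar>) / (b / 2))"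
    using \<open>b > 0\<close> by simp
qed (use exp_tail_exp_moment(1)[OF assms] in auto)

text \<open>Second-order Taylor bound for the exponential with Lagrange remainder.\<close>
lemma exp_le_quadratic: "exp (z::real) \<le> 1 + z + z\<^sup>2 * exp \<bar>z\<bar> / 2"
proof -
  obtain t where t: "\<bar>t\<bar> \<le> \<bar>z\<bar>" "exp z = (\<Sum>m<2. z ^ m / fact m) + exp t / fact 2 * z ^ 2"
    using Maclaurin_exp_le[of z 2] by blast
  have "exp t * z\<^sup>2 \<le> exp \<bar>z\<bar> * z\<^sup>2"
    using t(1) by (intro mult_right_mono) auto
  then show ?thesis using t(2) by (simp add: numeral_2_eq_2 field_simps)
qed

lemma square_le_exp:
  fixes v \<beta> :: real
  assumes "\<beta> > 0"
  shows "v\<^sup>2 \<le> 16 / \<beta>\<^sup>2 * exp (\<beta> * \<bar>v\<bar> / 2)"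
proof -
  define w where "w = \<beta> * \<bar>v\<bar> / 4"
  have "0 \<le> w" using assms by (simp add: w_def)
  moreover have "w \<le> exp w" using exp_ge_add_one_self[of w] by linarith
  ultimately have "w\<^sup>2 \<le> (exp w)\<^sup>2" by (simp add: power_mono)
  also have "\<dots> = exp (\<beta> * \<bar>v\<bar> / 2)" by (simp add: w_def power2_eq_square mult_exp_exp)
  finally have "w\<^sup>2 \<le> exp (\<beta> * \<bar>v\<bar> / 2)" .
  moreover have "v\<^sup>2 = 16 / \<beta>\<^sup>2 * w\<^sup>2" using assms by (simp add: w_def power2_eq_square field_simps)
  ultimately show ?thesis using assms by (simp add: divide_right_mono)
qed

lemma exp_le_quadratic_tail:
  fixes v \<alpha> b :: real
  assumes "b > 0" "0 \<le> \<alpha>" "\<alpha> \<le> b / 4"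
  shows "exp (\<alpha> * v) \<le> 1 + \<alpha> * v + \<alpha>\<^sup>2 * (32 / b\<^sup>2 * exp (b / 2 * \<bar>v\<bar>))"
proof -
  have "\<alpha> * \<bar>v\<bar> \<le> b / 4 * \<bar>v\<bar>"
    using assms by (intro mult_right_mono) auto
  then have "exp (\<alpha> * \<bar>v\<bar>) \<le> exp (b / 2 * \<bar>v\<bar> / 2)"
    by simp
  then have "v\<^sup>2 * exp (\<alpha> * \<bar>v\<bar>) \<le> (16 / (b / 2)\<^sup>2 * exp (b / 2 * \<bar>v\<bar> / 2)) * exp (b / 2 * \<bar>v\<bar> / 2)"
    using square_le_exp[of "b / 2" v] assms(1) by (intro mult_mono) auto
  also have "\<dots> = 2 * (32 / b\<^sup>2 * exp (b / 2 * \<bar>v\<bar>))"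
    by (simp add: mult_exp_exp power2_eq_square)
  finally have "\<alpha>\<^sup>2 * (v\<^sup>2 * exp (\<alpha> * \<bar>v\<bar>)) \<le> 2 * (\<alpha>\<^sup>2 * (32 / b\<^sup>2 * exp (b / 2 * \<bar>v\<bar>)))"
    by (subst mult.left_commute, rule mult_left_mono) simp_all
  moreover have "exp (\<alpha> * v) \<le> 1 + \<alpha> * v + \<alpha>\<^sup>2 * (v\<^sup>2 * exp (\<alpha> * \<bar>v\<bar>)) / 2"
    using exp_le_quadratic[of "\<alpha> * v"] assms(2) by (simp add: abs_mult power_mult_distrib)
  moreover have "\<And>A B C D :: real. A \<le> B + C / 2 \<Longrightarrow> C \<le> 2 * D \<Longrightarrow> A \<le> B + D"
    by linarith
  ultimately show ?thesis by blast
qed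

lemma exp_tail_mgf_quadratic:
  assumes "prob_space M" and [measurable]: "V \<in> borel_measurable M"
    and tail: "exp_tail M V a b" and "b > 0" and \<alpha>: "0 \<le> \<alpha>" "\<alpha> \<le> b / 4"
  shows "integrable M V" and "integrable M (\<lambda>x. exp (\<alpha> * V x))"
    and "(LINT x|M. exp (\<alpha> * V x)) \<le> 1 + \<alpha> * (LINT x|M. V x) + \<alpha>\<^sup>2 * (32 / b\<^sup>2 * tail_moment_const a b)"
proof -
  interpret prob_space M by fact
  let ?E = "\<lambda>x. exp (b / 2 * \<bar>V x\<bar>)"
  have E: "integrable M ?E" "(LINT x|M. ?E x) \<le> tail_moment_const a b"
    using exp_tail_exp_moment[OF assms(1,2) tail \<open>b > 0\<close>] by auto
  show V: "integrable M V"
    by (rule exp_tail_integrable[OF assms(1-4)])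
  show I: "integrable M (\<lambda>x. exp (\<alpha> * V x))"
  proof (rule Bochner_Integration.integrable_bound[OF E(1)])
    have "\<alpha> * v \<le> b / 2 * \<bar>v\<bar>" for v :: real
    proof -
      have "\<alpha> * v \<le> \<alpha> * \<bar>v\<bar>" using \<alpha> by (intro mult_left_mono) auto
      also have "\<dots> \<le> b / 2 * \<bar>v\<bar>" using \<alpha> by (intro mult_right_mono) auto
      finally show ?thesis .
    qed
    then show "AE x in M. norm (exp (\<alpha> * V x)) \<le> norm (?E x)" by simp
  qed simp
  have "(LINT x|M. exp (\<alpha> * V x)) \<le> (LINT x|M. 1 + \<alpha> * V x + \<alpha>\<^sup>2 * (32 / b\<^sup>2 * ?E x))"
    using exp_le_quadratic_tail[OF \<open>b > 0\<close> \<alpha>] I V E(1) by (intro integral_mono) auto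
  also have "\<dots> = 1 + \<alpha> * (LINT x|M. V x) + \<alpha>\<^sup>2 * (32 / b\<^sup>2 * (LINT x|M. ?E x))"
    using V E(1) by (simp add: prob_space)
  also have "\<dots> \<le> 1 + \<alpha> * (LINT x|M. V x) + \<alpha>\<^sup>2 * (32 / b\<^sup>2 * tail_moment_const a b)"
    using E(2) by (intro add_left_mono mult_left_mono) auto
  finally show "(LINT x|M. exp (\<alpha> * V x)) \<le> 1 + \<alpha> * (LINT x|M. V x) + \<alpha>\<^sup>2 * (32 / b\<^sup>2 * tail_moment_const a b)" .
qed

text \<open>Admissible range of alpha in the drift bound; it depends only on the tail constants and d.\<close>
definition drift_radius :: "real \<Rightarrow> real \<Rightarrow> real \<Rightarrow> real" where
  "drift_radius a b d = min (b / 4) (d / (2 * (32 / b\<^sup>2 * tail_moment_const a b) + 1))"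

lemma drift_radius_pos: "b > 0 \<Longrightarrow> d > 0 \<Longrightarrow> drift_radius a b d > 0"
  unfolding drift_radius_def using tail_moment_const_pos[of b a]
  by (auto intro!: divide_pos_pos add_nonneg_pos)

lemma exp_tail_negative_drift_mgf:
  assumes "prob_space M" and "V \<in> borel_measurable M"
    and "exp_tail M V a b" and "b > 0" and drift: "(LINT x|M. V x) \<le> - d"
    and \<alpha>: "0 < \<alpha>" "\<alpha> < drift_radius a b d"
  shows "integrable M (\<lambda>x. exp (\<alpha> * V x))" and "(LINT x|M. exp (\<alpha> * V x)) \<le> 1 - \<alpha> * d / 2"
proof -
  define K where "K = 32 / b\<^sup>2 * tail_moment_const a b"
  have "K > 0" using tail_moment_const_pos[OF \<open>b > 0\<close>] \<open>b > 0\<close> by (simp add: K_def)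
  have "\<alpha> \<le> b / 4" "\<alpha> < d / (2 * K + 1)" using \<alpha> by (simp_all add: drift_radius_def K_def)
  note quadratic = exp_tail_mgf_quadratic[OF assms(1-4) less_imp_le[OF \<alpha>(1)] \<open>\<alpha> \<le> b / 4\<close>]
  show "integrable M (\<lambda>x. exp (\<alpha> * V x))" by (fact quadratic(2))
  have "\<alpha> * K \<le> d / 2"
    using \<open>\<alpha> < d / (2 * K + 1)\<close> \<open>K > 0\<close> \<alpha>(1) by (simp add: field_simps)
  then have "\<alpha>\<^sup>2 * K \<le> \<alpha> * (d / 2)"
    using \<alpha>(1) by (simp add: power2_eq_square mult.assoc mult_left_mono)
  moreover have "\<alpha> * (LINT x|M. V x) \<le> \<alpha> * (- d)"
    using drift \<alpha>(1) by (intro mult_left_mono) auto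
  ultimately show "(LINT x|M. exp (\<alpha> * V x)) \<le> 1 - \<alpha> * d / 2"
    using quadratic(3) unfolding K_def by linarith
qed

text \<open>The same for a contraction s W of W, with an extra constant factor exp c;
  this is the shape in which the bound is used.\<close>
lemma exp_tail_negative_drift_mgf_scaled:
  assumes "prob_space M" and [measurable]: "W \<in> borel_measurable M"
    and tail: "exp_tail M W a b" and "b > 0" and "\<bar>s\<bar> \<le> 1"
    and drift: "s * (LINT x|M. W x) \<le> - d"
    and \<alpha>: "0 < \<alpha>" "\<alpha> < drift_radius a b d"
    and g: "\<And>x. g x = exp (c + \<alpha> * (s * W x))"
  shows "integrable M g \<and> (LINT x|M. g x) \<le> exp c * (1 - \<alpha> * d / 2)"
proof -
  have "exp_tail M (\<lambda>x. s * W x) a b"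
    using \<open>\<bar>s\<bar> \<le> 1\<close> by (intro exp_tail_mono[OF assms(1,2) tail]) (auto simp: abs_mult mult_left_le_one_le)
  note mgf = exp_tail_negative_drift_mgf[OF assms(1) _ this \<open>b > 0\<close> _ \<alpha>]
  have "g = (\<lambda>x. exp c * exp (\<alpha> * (s * W x)))" using g by (auto simp: exp_add)
  then show ?thesis using mgf drift by (auto intro: mult_left_mono)
qed

lemma uniform_signed_drift_mgf:
  fixes M :: "real \<Rightarrow> 'a measure" and W :: "real \<Rightarrow> 'a \<Rightarrow> real"
  assumes "\<And>\<theta>. prob_space (M \<theta>)" and "\<And>\<theta>. W \<theta> \<in> borel_measurable (M \<theta>)"
    and "\<And>\<theta>. exp_tail (M \<theta>) (W \<theta>) a b" and "b > 0" and "d > 0"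
    and drift: "\<And>\<theta>. \<bar>\<theta>\<bar> > k \<Longrightarrow> sgn \<theta> * (LINT x|M \<theta>. W \<theta> x) \<le> - d"
  obtains \<alpha>0 where "\<alpha>0 > 0"
    and "\<And>\<alpha> \<theta> c g. 0 < \<alpha> \<Longrightarrow> \<alpha> < \<alpha>0 \<Longrightarrow> \<bar>\<theta>\<bar> > k \<Longrightarrow>
           (\<And>x. g x = exp (c + \<alpha> * (sgn \<theta> * W \<theta> x))) \<Longrightarrow>
           integrable (M \<theta>) g \<and> (LINT x|M \<theta>. g x) \<le> exp c * (1 - \<alpha> * d / 2)"
proof
  show "drift_radius a b d > 0" using drift_radius_pos[OF \<open>b > 0\<close> \<open>d > 0\<close>] .
  fix \<alpha> \<theta> c and g :: "'a \<Rightarrow> real"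
  assume "0 < \<alpha>" "\<alpha> < drift_radius a b d" "\<bar>\<theta>\<bar> > k" "\<And>x. g x = exp (c + \<alpha> * (sgn \<theta> * W \<theta> x))"
  moreover have "\<bar>sgn \<theta>\<bar> \<le> (1::real)" by (simp add: abs_sgn_eq)
  ultimately show "integrable (M \<theta>) g \<and> (LINT x|M \<theta>. g x) \<le> exp c * (1 - \<alpha> * d / 2)"
    using assms drift by (intro exp_tail_negative_drift_mgf_scaled[where s = "sgn \<theta>"]) auto
qed

lemma noise_density_facts:
  assumes "noise_density f"
  shows "f \<in> borel_measurable borel" and "integrable lborel f" and "\<And>x. 0 < f x"
    and "\<exists>B. \<forall>x. \<bar>f x\<bar> \<le> B"
proof -
  show "f \<in> borel_measurable borel"
    using assms by (simp add: noise_density_def borel_measurable_continuous_onI)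
  show "integrable lborel f" "\<And>x. 0 < f x" using assms by (auto simp: noise_density_def)
  have "bounded (range f)" using assms by (simp add: noise_density_def)
  then show "\<exists>B. \<forall>x. \<bar>f x\<bar> \<le> B" by (auto simp: bounded_iff)
qed

text \<open>The unnormalised posterior density f2 (x - theta) f1 (y - x) is measurable, positive and
  integrable in x (f2 is bounded and x \<mapsto> f1 (y - x) integrable), so its integral is positive.\<close>
lemma post_dens_measurable [measurable]:
  assumes "noise_density f1" and "noise_density f2"
  shows "post_dens f1 f2 y \<theta> \<in> borel_measurable borel"
proof -
  note [measurable] = noise_density_facts(1)[OF assms(1)] noise_density_facts(1)[OF assms(2)]
  show ?thesis unfolding post_dens_def by measurable
qed

lemma post_dens_pos:
  assumes "noise_density f1" and "noise_density f2"
  shows "0 < post_dens f1 f2 y \<theta> x"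
  using noise_density_facts(3)[OF assms(1)] noise_density_facts(3)[OF assms(2)]
  by (simp add: post_dens_def)

lemma post_dens_integrable:
  assumes "noise_density f1" and "noise_density f2"
  shows "integrable lborel (post_dens f1 f2 y \<theta>)"
proof -
  obtain B where B: "\<And>x. \<bar>f2 x\<bar> \<le> B" using noise_density_facts(4)[OF assms(2)] by auto
  have "integrable lborel (\<lambda>x. f1 (y + (-1) * x))"
    using noise_density_facts(1,2)[OF assms(1)] by (intro lborel_integrable_real_affine) auto
  then have int: "integrable lborel (\<lambda>x. B * f1 (y - x))" by simp
  have bound: "\<bar>post_dens f1 f2 y \<theta> x\<bar> \<le> \<bar>B * f1 (y - x)\<bar>" for x
  proof -
    have "\<bar>f2 (x - \<theta>)\<bar> * \<bar>f1 (y - x)\<bar> \<le> B * \<bar>f1 (y - x)\<bar>"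
      using B by (rule mult_right_mono) simp
    moreover have "0 \<le> B" using B[of 0] by simp
    ultimately show ?thesis by (simp add: post_dens_def abs_mult)
  qed
  show ?thesis
  proof (rule Bochner_Integration.integrable_bound[OF int])
    show "post_dens f1 f2 y \<theta> \<in> borel_measurable lborel"
      using post_dens_measurable[OF assms] by simp
    show "AE x in lborel. norm (post_dens f1 f2 y \<theta> x) \<le> norm (B * f1 (y - x))"
      using bound by simp
  qed
qed

lemma post_normaliser_pos:
  assumes "noise_density f1" and "noise_density f2"
  shows "0 < (LINT u|lborel. post_dens f1 f2 y \<theta> u)"
proof -
  have pos: "\<And>x. 0 < post_dens f1 f2 y \<theta> x" by (rule post_dens_pos[OF assms])
  have "(LINT u|lborel. post_dens f1 f2 y \<theta> u) \<noteq> 0"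
  proof
    assume "(LINT u|lborel. post_dens f1 f2 y \<theta> u) = 0"
    then have "AE x in lborel. post_dens f1 f2 y \<theta> x = 0"
      using integral_nonneg_eq_0_iff_AE[OF post_dens_integrable[OF assms]] pos
      by (simp add: less_imp_le)
    then have "AE x::real in lborel. False"
      by (rule AE_mp) (use pos in \<open>auto intro!: AE_I2 simp: less_le\<close>)
    then have "ae_filter (lborel :: real measure) = bot" using trivial_limit_def by blast
    then show False by (simp add: ae_filter_eq_bot_iff)
  qed
  moreover have "0 \<le> (LINT u|lborel. post_dens f1 f2 y \<theta> u)"
    using pos by (simp add: less_imp_le)
  ultimately show ?thesis by simp
qed

lemma cond_law_space [simp]:
  "space (cond_law f1 f2 y \<theta>) = UNIV" and cond_law_sets [simp]: "sets (cond_law f1 f2 y \<theta>) = sets borel"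
  unfolding cond_law_def by auto

lemma cond_law_prob_space:
  assumes "noise_density f1" and "noise_density f2"
  shows "prob_space (cond_law f1 f2 y \<theta>)"
proof
  let ?Z = "LINT u|lborel. post_dens f1 f2 y \<theta> u"
  have Z: "0 < ?Z" by (rule post_normaliser_pos[OF assms])
  have "emeasure (cond_law f1 f2 y \<theta>) UNIV = (\<integral>\<^sup>+ x. ennreal (post_dens f1 f2 y \<theta> x / ?Z) \<partial>lborel)"
    unfolding cond_law_def using post_dens_measurable[OF assms] by (subst emeasure_density) auto
  also have "\<dots> = ennreal (LINT x|lborel. post_dens f1 f2 y \<theta> x / ?Z)"
    using post_dens_integrable[OF assms] post_dens_pos[OF assms] Z
    by (intro nn_integral_eq_integral) (auto simp: less_imp_le)
  also have "\<dots> = 1" using Z by simp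
  finally show "emeasure (cond_law f1 f2 y \<theta>) (space (cond_law f1 f2 y \<theta>)) = 1" by simp
qed

lemma cond_law_measurable:
  "(g :: real \<Rightarrow> real) \<in> borel_measurable borel \<Longrightarrow> g \<in> borel_measurable (cond_law f1 f2 y \<theta>)"
  by (simp add: measurable_def)

lemma GTIP_exp_tail:
  assumes "GTIP f1 f2 y U"
  obtains a b where "a > 0" and "b > 0" and "\<And>\<theta>. exp_tail (cond_law f1 f2 y \<theta>) (U \<theta>) a b"
  using assms unfolding GTIP_def exp_tail_def by auto

lemma DUR_signed_drift:
  assumes nd: "noise_density f1" "noise_density f2" and "DUR f1 f2 y d k"
    and tail: "exp_tail (cond_law f1 f2 y \<theta>) (\<lambda>x. x - \<theta>) a b" and "b > 0" and "\<bar>\<theta>\<bar> > k"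
  shows "sgn \<theta> * (LINT x|cond_law f1 f2 y \<theta>. x - \<theta>) \<le> - d"
proof -
  let ?L = "cond_law f1 f2 y \<theta>"
  interpret prob_space ?L by (rule cond_law_prob_space[OF nd])
  have "integrable ?L (\<lambda>x. x - \<theta>)"
    by (rule exp_tail_integrable[OF prob_space_axioms _ tail \<open>b > 0\<close>]) (intro cond_law_measurable; simp)
  then have "integrable ?L (\<lambda>x. x)"
    using Bochner_Integration.integrable_add[of _ "\<lambda>x. x - \<theta>" "\<lambda>_. \<theta>"] by simp
  moreover have "prob UNIV = 1" using prob_space by simp
  ultimately have "sgn \<theta> * (LINT x|?L. x - \<theta>) = sgn \<theta> * (LINT x|?L. x) - \<bar>\<theta>\<bar>"
    by (simp add: right_diff_distrib abs_sgn mult.commute)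
  moreover have "sgn \<theta> * (LINT x|?L. x) \<le> \<bar>LINT x|?L. x\<bar>"
    by (simp add: sgn_real_def abs_ge_self abs_ge_minus_self)
  moreover have "\<bar>LINT x|?L. x\<bar> \<le> \<bar>\<theta>\<bar> - d"
    using assms(3,6) by (simp add: DUR_def)
  ultimately show ?thesis by linarith
qed

lemma PUR_signed_drift:
  assumes nd: "noise_density f1" "noise_density f2" and "PUR f1 f2 y d k"
    and tail: "exp_tail (cond_law f1 f2 y \<theta>) (\<lambda>x. x) a b" and "b > 0" and "\<bar>\<theta>\<bar> > k"
  shows "sgn \<theta> * (LINT x|cond_law f1 f2 y \<theta>. y - x) \<le> - d"
proof -
  let ?L = "cond_law f1 f2 y \<theta>"
  interpret prob_space ?L by (rule cond_law_prob_space[OF nd])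
  have "integrable ?L (\<lambda>x. x)"
    by (rule exp_tail_integrable[OF prob_space_axioms _ tail \<open>b > 0\<close>]) (intro cond_law_measurable; simp)
  moreover have "prob UNIV = 1" using prob_space by simp
  ultimately have "(LINT x|?L. y - x) = - (LINT x|?L. x - y)" by simp
  then show ?thesis using assms(3,6) by (simp add: PUR_def)
qed

text \<open>Part (1): under DUR and GTIP for (X - Theta, Theta), apply the uniform drift bound to
  V = sgn theta (X - theta), whose mean is sgn theta E X - |theta| <= -d.\<close>
lemma DUR_mgf_bound:
  assumes nd: "noise_density f1" "noise_density f2"
    and "DUR f1 f2 y d k" and "GTIP f1 f2 y (\<lambda>\<theta> x. x - \<theta>)"
  shows "\<exists>\<alpha>0>0. \<forall>\<alpha>. 0 < \<alpha> \<and> \<alpha> < \<alpha>0 \<longrightarrow>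
          (\<forall>\<theta>. \<theta> > k \<longrightarrow>
             integrable (cond_law f1 f2 y \<theta>) (\<lambda>x. exp (\<alpha> * x)) \<and>
             (LINT x|cond_law f1 f2 y \<theta>. exp (\<alpha> * x)) \<le> exp (\<alpha> * \<theta>) * (1 - \<alpha> * d / 2)) \<and>
          (\<forall>\<theta>. \<theta> < - k \<longrightarrow>
             integrable (cond_law f1 f2 y \<theta>) (\<lambda>x. exp (- \<alpha> * x)) \<and>
             (LINT x|cond_law f1 f2 y \<theta>. exp (- \<alpha> * x)) \<le> exp (- \<alpha> * \<theta>) * (1 - \<alpha> * d / 2))"
proof -
  let ?L = "cond_law f1 f2 y"
  have "d > 0" "k > 0" using assms(3) by (auto simp: DUR_def)
  obtain a b where "b > 0" and tail: "\<And>\<theta>. exp_tail (?L \<theta>) (\<lambda>x. x - \<theta>) a b"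
    using GTIP_exp_tail[OF assms(4)] by blast
  note P = cond_law_prob_space[OF nd]
  have meas: "\<And>\<theta>. (\<lambda>x. x - \<theta>) \<in> borel_measurable (?L \<theta>)"
    by (intro cond_law_measurable) simp
  have drift: "sgn \<theta> * (LINT x|?L \<theta>. x - \<theta>) \<le> - d" if "\<bar>\<theta>\<bar> > k" for \<theta>
    by (rule DUR_signed_drift[OF nd assms(3) tail \<open>b > 0\<close> that])
  obtain \<alpha>0 where "\<alpha>0 > 0" and mgf: "\<And>\<alpha> \<theta> c g. 0 < \<alpha> \<Longrightarrow> \<alpha> < \<alpha>0 \<Longrightarrow> \<bar>\<theta>\<bar> > k \<Longrightarrow>
      (\<And>x. g x = exp (c + \<alpha> * (sgn \<theta> * (x - \<theta>)))) \<Longrightarrow>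
      integrable (?L \<theta>) g \<and> (LINT x|?L \<theta>. g x) \<le> exp c * (1 - \<alpha> * d / 2)"
    using uniform_signed_drift_mgf[of ?L "\<lambda>\<theta> x. x - \<theta>", OF P meas tail \<open>b > 0\<close> \<open>d > 0\<close> drift]
    by blast
  have "integrable (?L \<theta>) (\<lambda>x. exp (\<alpha> * x)) \<and>
      (LINT x|?L \<theta>. exp (\<alpha> * x)) \<le> exp (\<alpha> * \<theta>) * (1 - \<alpha> * d / 2)"
    if "0 < \<alpha>" "\<alpha> < \<alpha>0" "\<theta> > k" for \<alpha> \<theta>
    by (rule mgf[OF that(1,2)]) (use that(3) \<open>k > 0\<close> in \<open>auto simp: algebra_simps\<close>)
  moreover have "integrable (?L \<theta>) (\<lambda>x. exp (- \<alpha> * x)) \<and>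
      (LINT x|?L \<theta>. exp (- \<alpha> * x)) \<le> exp (- \<alpha> * \<theta>) * (1 - \<alpha> * d / 2)"
    if "0 < \<alpha>" "\<alpha> < \<alpha>0" "\<theta> < - k" for \<alpha> \<theta>
    by (rule mgf[OF that(1,2)]) (use that(3) \<open>k > 0\<close> in \<open>auto simp: algebra_simps\<close>)
  ultimately show ?thesis using \<open>\<alpha>0 > 0\<close> by blast
qed

text \<open>Part (2): under PUR and GTIP for (X, Theta), apply it to V = sgn theta (y - X); the tail of
  y - X follows from that of X by a shift.\<close>
lemma PUR_mgf_bound:
  assumes nd: "noise_density f1" "noise_density f2"
    and "PUR f1 f2 y d k" and "GTIP f1 f2 y (\<lambda>\<theta> x. x)"
  shows "\<exists>\<alpha>0>0. \<forall>\<alpha>. 0 < \<alpha> \<and> \<alpha> < \<alpha>0 \<longrightarrow>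
          (\<forall>\<theta>. \<theta> > k \<longrightarrow>
             integrable (cond_law f1 f2 y \<theta>) (\<lambda>x. exp (\<alpha> * (y - (x - \<theta>)))) \<and>
             (LINT x|cond_law f1 f2 y \<theta>. exp (\<alpha> * (y - (x - \<theta>))))
                \<le> exp (\<alpha> * \<theta>) * (1 - \<alpha> * d / 2)) \<and>
          (\<forall>\<theta>. \<theta> < - k \<longrightarrow>
             integrable (cond_law f1 f2 y \<theta>) (\<lambda>x. exp (- \<alpha> * (y - (x - \<theta>)))) \<and>
             (LINT x|cond_law f1 f2 y \<theta>. exp (- \<alpha> * (y - (x - \<theta>))))
                \<le> exp (- \<alpha> * \<theta>) * (1 - \<alpha> * d / 2))"
proof -
  let ?L = "cond_law f1 f2 y"
  have "d > 0" "k > 0" using assms(3) by (auto simp: PUR_def)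
  obtain a0 b where "b > 0" and tail0: "\<And>\<theta>. exp_tail (?L \<theta>) (\<lambda>x. x) a0 b"
    using GTIP_exp_tail[OF assms(4)] by blast
  note P = cond_law_prob_space[OF nd]
  have meas: "\<And>\<theta>. (\<lambda>x. x) \<in> borel_measurable (?L \<theta>)" "\<And>\<theta>. (\<lambda>x. y - x) \<in> borel_measurable (?L \<theta>)"
    by (intro cond_law_measurable; simp)+
  define a where "a = max a0 1 * exp (b * \<bar>- y\<bar>)"
  have tail: "exp_tail (?L \<theta>) (\<lambda>x. y - x) a b" for \<theta>
    unfolding a_def
  proof (rule exp_tail_mono[OF P _ exp_tail_shift[OF P meas(1) tail0 \<open>b > 0\<close>, where c = "- y"]])
    show "(\<lambda>x. x + - y) \<in> borel_measurable (?L \<theta>)" by (intro cond_law_measurable) simp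
  qed simp
  have drift: "sgn \<theta> * (LINT x|?L \<theta>. y - x) \<le> - d" if "\<bar>\<theta>\<bar> > k" for \<theta>
    by (rule PUR_signed_drift[OF nd assms(3) tail0 \<open>b > 0\<close> that])
  obtain \<alpha>0 where "\<alpha>0 > 0" and mgf: "\<And>\<alpha> \<theta> c g. 0 < \<alpha> \<Longrightarrow> \<alpha> < \<alpha>0 \<Longrightarrow> \<bar>\<theta>\<bar> > k \<Longrightarrow>
      (\<And>x. g x = exp (c + \<alpha> * (sgn \<theta> * (y - x)))) \<Longrightarrow>
      integrable (?L \<theta>) g \<and> (LINT x|?L \<theta>. g x) \<le> exp c * (1 - \<alpha> * d / 2)"
    using uniform_signed_drift_mgf[of ?L "\<lambda>\<theta> x. y - x", OF P meas(2) tail \<open>b > 0\<close> \<open>d > 0\<close> drift]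
    by blast
  have "integrable (?L \<theta>) (\<lambda>x. exp (\<alpha> * (y - (x - \<theta>)))) \<and>
      (LINT x|?L \<theta>. exp (\<alpha> * (y - (x - \<theta>)))) \<le> exp (\<alpha> * \<theta>) * (1 - \<alpha> * d / 2)"
    if "0 < \<alpha>" "\<alpha> < \<alpha>0" "\<theta> > k" for \<alpha> \<theta>
    by (rule mgf[OF that(1,2)]) (use that(3) \<open>k > 0\<close> in \<open>auto simp: algebra_simps\<close>)
  moreover have "integrable (?L \<theta>) (\<lambda>x. exp (- \<alpha> * (y - (x - \<theta>)))) \<and>
      (LINT x|?L \<theta>. exp (- \<alpha> * (y - (x - \<theta>)))) \<le> exp (- \<alpha> * \<theta>) * (1 - \<alpha> * d / 2)"
    if "0 < \<alpha>" "\<alpha> < \<alpha>0" "\<theta> < - k" for \<alpha> \<theta>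
    by (rule mgf[OF that(1,2)]) (use that(3) \<open>k > 0\<close> in \<open>auto simp: algebra_simps\<close>)
  ultimately show ?thesis using \<open>\<alpha>0 > 0\<close> by blast
qed

theorem mainTheorem4:
  fixes f1 f2 :: "real \<Rightarrow> real" and y d k :: real
  assumes "noise_density f1" and "noise_density f2"
    and "posterior_proper f1 f2 y"
  shows
    "(DUR f1 f2 y d k \<and> GTIP f1 f2 y (\<lambda>\<theta> x. x - \<theta>) \<longrightarrow>
       (\<exists>\<alpha>0>0. \<forall>\<alpha>. 0 < \<alpha> \<and> \<alpha> < \<alpha>0 \<longrightarrow>
          (\<forall>\<theta>. \<theta> > k \<longrightarrow>
             integrable (cond_law f1 f2 y \<theta>) (\<lambda>x. exp (\<alpha> * x)) \<and>
             (LINT x|cond_law f1 f2 y \<theta>. exp (\<alpha> * x)) \<le> exp (\<alpha> * \<theta>) * (1 - \<alpha> * d / 2)) \<and>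
          (\<forall>\<theta>. \<theta> < - k \<longrightarrow>
             integrable (cond_law f1 f2 y \<theta>) (\<lambda>x. exp (- \<alpha> * x)) \<and>
             (LINT x|cond_law f1 f2 y \<theta>. exp (- \<alpha> * x)) \<le> exp (- \<alpha> * \<theta>) * (1 - \<alpha> * d / 2))))
     \<and>
     (PUR f1 f2 y d k \<and> GTIP f1 f2 y (\<lambda>\<theta> x. x) \<longrightarrow>
       (\<exists>\<alpha>0>0. \<forall>\<alpha>. 0 < \<alpha> \<and> \<alpha> < \<alpha>0 \<longrightarrow>
          (\<forall>\<theta>. \<theta> > k \<longrightarrow>
             integrable (cond_law f1 f2 y \<theta>) (\<lambda>x. exp (\<alpha> * (y - (x - \<theta>)))) \<and>
             (LINT x|cond_law f1 f2 y \<theta>. exp (\<alpha> * (y - (x - \<theta>))))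
                \<le> exp (\<alpha> * \<theta>) * (1 - \<alpha> * d / 2)) \<and>
          (\<forall>\<theta>. \<theta> < - k \<longrightarrow>
             integrable (cond_law f1 f2 y \<theta>) (\<lambda>x. exp (- \<alpha> * (y - (x - \<theta>)))) \<and>
             (LINT x|cond_law f1 f2 y \<theta>. exp (- \<alpha> * (y - (x - \<theta>))))
                \<le> exp (- \<alpha> * \<theta>) * (1 - \<alpha> * d / 2))))"
  using DUR_mgf_bound[OF assms(1,2)] PUR_mgf_bound[OF assms(1,2)] by blast

end
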